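(* Let $H=(V,E,\omega,d)$ be a generalized hypergraph with $V=\{1,\dots,n\}$. For every $\rho\in R_n$ there exists a symmetric matrix $N_{\rho,z}\in M_n(K(z))$ such that for every real $\lambda>0$ the entries of $N_{\rho,z}$ have no pole at $z=\lambda$, the evaluated matrix $N_{\rho,\lambda}$ has non-negative entries, and $N_{\rho,\lambda}\,g=f$ for every $f\in U_\rho$ and every $g\in G_\lambda(f)$.
   Context: A generalized hypergraph $H=(V,E,\omega,d)$ consists of a finite set $V=\{1,\dots,n\}$, a set $E$ of nonempty subsets of $V$, a function $\omega\colon E\to\mathbb{R}_{>0}$ and a function $d\colon V\to\mathbb{R}_{>0}$, $x\mapsto d_x$ (no relation between $d$ and $\omega$ is assumed). Functions $V\to\mathbb{R}$ are identified with vectors $f=(f_1,\dots,f_n)^\top\in\mathbb{R}^n$; $\delta_x$ is the $x$-th standard basis vector. For $e\in E$, $B_e=\mathrm{Conv}\{\delta_x-\delta_y : x,y\in e\}$, and $L(f)=\{\sum_{e\in E}\omega_e\mathtt{b}_e(\mathtt{b}_e^\top f) : \mathtt{b}_e\in\operatorname{argmax}_{\mathtt b\in B_e}\mathtt b^\top f\}\subset\mathbb{R}^n$ (sums of sets are Minkowski sums). $D=\mathrm{diag}(d_1,\dots,d_n)$. $\mathbb{R}^n=\bigsqcup_{\rho\in R_n}U_\rho$ is the partition into order-pattern classes: $f,g$ lie in the same $U_\rho$ iff $\mathrm{sgn}(f_x-f_y)=\mathrm{sgn}(g_x-g_y)$ for all $x,y\in V$. $K=\mathbb{Q}(\{\omega_e\}_{e\in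 E},\{d_x\}_{x\in V})\subset\mathbb{R}$ is the subfield generated by the weights, and $K(z)$ the field of rational functions in $z$ over $K$. For $\lambda>0$, $G_\lambda\colon\mathbb{R}^n\to2^{\mathbb{R}^n}$ is $G_\lambda(f)=(D+\lambda L)(f)=\{Df+\lambda v: v\in L(f)\}$. *)

theory Defs
  imports "HOL-Analysis.Analysis" "HOL-Computational_Algebra.Polynomial"
begin

text \<open>Vertices are the elements of a finite type 'n (so V has n = CARD('n) elements);
functions V -> R are vectors real^'n.\<close>

definition gen_hypergraph :: "'n::finite set set \<Rightarrow> ('n set \<Rightarrow> real) \<Rightarrow> ('n \<Rightarrow> real) \<Rightarrow> bool" where
  "gen_hypergraph E \<omega> d \<longleftrightarrow> (\<forall>e\<in>E. e \<noteq> {}) \<and> (\<forall>e\<in>E. \<omega> e > 0) \<and> (\<forall>x. d x > 0)"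

definition is_real_subfield :: "real set \<Rightarrow> bool" where
  "is_real_subfield S \<longleftrightarrow> 0 \<in> S \<and> 1 \<in> S \<and>
     (\<forall>a\<in>S. \<forall>b\<in>S. a + b \<in> S \<and> a * b \<in> S) \<and> (\<forall>a\<in>S. - a \<in> S) \<and>
     (\<forall>a\<in>S. a \<noteq> 0 \<longrightarrow> inverse a \<in> S)"

definition gen_field :: "real set \<Rightarrow> real set" where
  "gen_field A = \<Inter>{S. is_real_subfield S \<and> A \<subseteq> S}"

definition weight_field :: "'n set set \<Rightarrow> ('n set \<Rightarrow> real) \<Rightarrow> ('n \<Rightarrow> real) \<Rightarrow> real set" where
  "weight_field E \<omega> d = gen_field (\<omega> ` E \<union> range d)"

definition Bset :: "'n::finite set \<Rightarrow> (real^'n) set" where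
  "Bset e = convex hull {axis x 1 - axis y 1 | x y. x \<in> e \<and> y \<in> e}"

definition hL :: "'n::finite set set \<Rightarrow> ('n set \<Rightarrow> real) \<Rightarrow> real^'n \<Rightarrow> (real^'n) set" where
  "hL E \<omega> f = {\<Sum>e\<in>E. (\<omega> e * (b e \<bullet> f)) *\<^sub>R b e | b.
      \<forall>e\<in>E. b e \<in> Bset e \<and> (\<forall>b'\<in>Bset e. b' \<bullet> f \<le> b e \<bullet> f)}"

definition Dmul :: "('n::finite \<Rightarrow> real) \<Rightarrow> real^'n \<Rightarrow> real^'n" where
  "Dmul d f = (\<chi> x. d x * f $ x)"

definition G_lam :: "'n::finite set set \<Rightarrow> ('n set \<Rightarrow> real) \<Rightarrow> ('n \<Rightarrow> real) \<Rightarrow> real \<Rightarrow> real^'n \<Rightarrow> (real^'n) set" where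
  "G_lam E \<omega> d lam f = {Dmul d f + lam *\<^sub>R v | v. v \<in> hL E \<omega> f}"

text \<open>Order-pattern classes U_rho; R_n is the set of all of them.\<close>
definition order_class :: "real^'n::finite \<Rightarrow> (real^'n) set" where
  "order_class f0 = {g. \<forall>x y. sgn (g $ x - g $ y) = sgn (f0 $ x - f0 $ y)}"

definition order_classes :: "(real^'n::finite) set set" where
  "order_classes = range order_class"

text \<open>Elements of K(z) represented as fractions p/q of real polynomials with
coefficients in K and q nonzero.\<close>
definition in_Kz :: "real set \<Rightarrow> real poly \<times> real poly \<Rightarrow> bool" where
  "in_Kz K r \<longleftrightarrow> snd r \<noteq> 0 \<and> (\<forall>i. coeff (fst r) i \<in> K \<and> coeff (snd r) i \<in> K)"

definition rat_eq :: "real poly \<times> real poly \<Rightarrow> real poly \<times> real poly \<Rightarrow> bool" where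
  "rat_eq r s \<longleftrightarrow> fst r * snd s = fst s * snd r"

definition rat_eval :: "real poly \<times> real poly \<Rightarrow> real \<Rightarrow> real" where
  "rat_eval r z = poly (fst r) z / poly (snd r) z"

definition eval_mat :: "('n::finite \<Rightarrow> 'n \<Rightarrow> real poly \<times> real poly) \<Rightarrow> real \<Rightarrow> real^'n^'n" where
  "eval_mat N z = (\<chi> i j. rat_eval (N i j) z)"

end

theory Submission
  imports Defs
begin

text \<open>On an order class every f orders the vertices like a fixed f0.  So for a maximizer
  \<open>b\<^sub>e \<in> B\<^sub>e\<close> one has \<open>b\<^sub>e\<^sup>T f = f(x\<^sub>e\<^sup>+) - f(x\<^sub>e\<^sup>-)\<close> for fixed f0-extreme vertices of e, and
  \<open>b\<^sub>e\<close> only charges level sets of f0 through these two vertices.  Summing \<open>g \<in> G\<^sub>\<lambda>(f)\<close> over the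
  level sets of f0 thus gives \<open>(C + \<lambda> L) h = \<Sigma>g\<close>, where h is f on one representative per level set,
  C is diagonal with the summed degrees and L is the weighted Laplacian of the contracted graph.
  A minimum principle shows that \<open>C + \<lambda> L\<close> is invertible with nonnegative inverse for \<open>\<lambda> \<ge> 0\<close>; it is
  symmetric, and by Cramer's rule its inverse is a matrix of rational functions over K.\<close>

section \<open>Diagonal plus weighted Laplacian matrices\<close>

definition incidence :: "('e \<Rightarrow> 'n) \<Rightarrow> ('e \<Rightarrow> 'n) \<Rightarrow> 'e \<Rightarrow> 'n \<Rightarrow> real" where
  "incidence p m e i = (if i = p e then 1 else 0) - (if i = m e then 1 else 0)"

definition diag_plus_laplacian ::
    "('n::finite \<Rightarrow> real) \<Rightarrow> 'e set \<Rightarrow> ('e \<Rightarrow> real) \<Rightarrow> ('e \<Rightarrow> 'n) \<Rightarrow> ('e \<Rightarrow> 'n) \<Rightarrow> real \<Rightarrow> real^'n^'n" where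
  "diag_plus_laplacian c E w p m z =
     (\<chi> i j. (if i = j then c i else 0) + z * (\<Sum>e\<in>E. w e * incidence p m e i * incidence p m e j))"

lemma sum_incidence_mult: "(\<Sum>j\<in>UNIV. incidence p m e j * x $ j) = x $ p e - x $ m e"
proof -
  have "(\<Sum>j\<in>UNIV. incidence p m e j * x $ j) =
        (\<Sum>j\<in>UNIV. if j = p e then x $ j else 0) - (\<Sum>j\<in>UNIV. if j = m e then x $ j else 0)"
    unfolding incidence_def left_diff_distrib sum_subtractf by (intro arg_cong2[where f="(-)"] sum.cong) auto
  then show ?thesis
    by simp
qed

lemma diag_plus_laplacian_mult_component:
  "(diag_plus_laplacian c E w p m z *v x) $ i =
     c i * x $ i + z * (\<Sum>e\<in>E. w e * incidence p m e i * (x $ p e - x $ m e))"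
proof -
  let ?inc = "incidence p m"
  have "(diag_plus_laplacian c E w p m z *v x) $ i =
        (\<Sum>j\<in>UNIV. (if i = j then c i else 0) * x $ j) +
        z * (\<Sum>j\<in>UNIV. \<Sum>e\<in>E. w e * ?inc e i * (?inc e j * x $ j))"
    by (simp add: diag_plus_laplacian_def matrix_vector_mult_def algebra_simps sum.distrib
        sum_distrib_left sum_distrib_right)
  also have "(\<Sum>j\<in>UNIV. \<Sum>e\<in>E. w e * ?inc e i * (?inc e j * x $ j)) =
             (\<Sum>e\<in>E. w e * ?inc e i * (x $ p e - x $ m e))"
    by (subst sum.swap) (simp add: sum_distrib_left[symmetric] sum_incidence_mult)
  also have "(\<Sum>j\<in>UNIV. (if i = j then c i else 0) * x $ j) =
             (\<Sum>j\<in>UNIV. if i = j then c i * x $ i else 0)"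
    by (rule sum.cong) auto
  finally show ?thesis
    by simp
qed

lemma transpose_diag_plus_laplacian:
  "transpose (diag_plus_laplacian c E w p m z) = diag_plus_laplacian c E w p m z"
  by (simp add: diag_plus_laplacian_def transpose_def vec_eq_iff mult.commute mult.left_commute)

text \<open>Minimum principle: at a minimal entry of x every edge term is \<open>\<le> 0\<close>.\<close>

lemma diag_plus_laplacian_nonneg_preimage:
  fixes x :: "real^'n::finite"
  assumes c: "\<forall>i. c i > 0" and w: "\<forall>e\<in>E. w e \<ge> 0" and z: "z \<ge> 0"
    and nonneg: "\<And>i. (diag_plus_laplacian c E w p m z *v x) $ i \<ge> 0"
  shows "x $ i \<ge> 0"
proof -
  define i0 where "i0 = arg_min_on (($) x) UNIV"
  have min: "x $ i0 \<le> x $ j" for j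
    unfolding i0_def by (rule arg_min_least) auto
  have "w e * incidence p m e i0 * (x $ p e - x $ m e) \<le> 0" if "e \<in> E" for e
  proof -
    have "incidence p m e i0 * (x $ p e - x $ m e) \<le> 0"
      using min[of "p e"] min[of "m e"] by (auto simp: incidence_def)
    then show ?thesis
      using w that by (metis mult.assoc mult_nonneg_nonpos)
  qed
  then have "z * (\<Sum>e\<in>E. w e * incidence p m e i0 * (x $ p e - x $ m e)) \<le> 0"
    using z by (simp add: mult_nonneg_nonpos sum_nonpos)
  then have "c i0 * x $ i0 \<ge> 0"
    using nonneg[of i0] by (simp add: diag_plus_laplacian_mult_component)
  then have "x $ i0 \<ge> 0"
    using c by (meson not_le zero_le_mult_iff)
  then show ?thesis
    using min[of i] by simp
qed

lemma det_diag_plus_laplacian_nonzero: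
  assumes c: "\<forall>i. c i > 0" and w: "\<forall>e\<in>E. w e \<ge> 0" and z: "z \<ge> 0"
  shows "det (diag_plus_laplacian c E w p m z) \<noteq> 0"
proof -
  let ?A = "diag_plus_laplacian c E w p m z"
  note nonneg = diag_plus_laplacian_nonneg_preimage[where p=p and m=m, OF c w z]
  have "x = 0" if "?A *v x = 0" for x
  proof -
    have neg: "?A *v (- x) = 0"
      using that by (simp add: matrix_vector_mult_def vec_eq_iff sum_negf)
    have "(- x) $ i \<ge> 0" for i
      by (rule nonneg) (use neg in simp)
    moreover have "x $ i \<ge> 0" for i
      by (rule nonneg) (use that in simp)
    ultimately show ?thesis
      by (simp add: vec_eq_iff order.antisym)
  qed
  then have "invertible ?A"
    unfolding invertible_left_inverse matrix_left_invertible_ker by blast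
  then show ?thesis
    by (simp add: invertible_det_nz)
qed

lemma diag_plus_laplacian_right_inverse:
  fixes X :: "real^'n::finite^'n"
  assumes c: "\<forall>i. c i > 0" and w: "\<forall>e\<in>E. w e \<ge> 0" and z: "z \<ge> 0"
    and inv: "diag_plus_laplacian c E w p m z ** X = mat 1"
  shows "transpose X = X" and "X $ k $ j \<ge> 0"
proof -
  let ?A = "diag_plus_laplacian c E w p m z"
  have "transpose X = transpose X ** (?A ** X)"
    using inv by simp
  also have "\<dots> = transpose (?A ** X) ** X"
    by (simp add: matrix_mul_assoc matrix_transpose_mul transpose_diag_plus_laplacian)
  also have "\<dots> = X"
    using inv by simp
  finally show "transpose X = X" .
  have col: "?A *v column j X = axis j 1"
  proof -
    have "column j (mat 1 :: real^'n^'n) = axis j 1"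
      by (simp add: column_def mat_def axis_def vec_eq_iff)
    then show ?thesis
      using inv matrix_vector_mul_assoc[of ?A X "axis j 1"] by (simp add: matrix_vector_mult_basis)
  qed
  have "column j X $ k \<ge> 0"
    by (rule diag_plus_laplacian_nonneg_preimage[where p=p and m=m, OF c w z]) (use col in \<open>simp add: axis_def\<close>)
  then show "X $ k $ j \<ge> 0"
    by (simp add: column_def)
qed

section \<open>Polynomials over a subfield and Cramer's rule\<close>

lemma gen_field_is_subfield: "is_real_subfield (gen_field A)"
  unfolding gen_field_def is_real_subfield_def by auto

lemma subset_gen_field: "A \<subseteq> gen_field A"
  unfolding gen_field_def by auto

lemma subfield_sum:
  assumes K: "is_real_subfield K" and f: "\<And>x. x \<in> S \<Longrightarrow> f x \<in> K"
  shows "(\<Sum>x\<in>S. f x) \<in> K"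
  using f by (induction S rule: infinite_finite_induct) (use K in \<open>auto simp: is_real_subfield_def\<close>)

lemma subfield_of_int:
  assumes K: "is_real_subfield K"
  shows "of_int k \<in> K"
proof -
  have nat: "of_nat n \<in> K" for n
    using K by (induction n) (auto simp: is_real_subfield_def)
  show ?thesis
  proof (cases k rule: int_cases)
    case (neg n)
    then show ?thesis
      using K nat[of "Suc n"] by (simp add: is_real_subfield_def del: of_nat_Suc)
  qed (use nat in simp)
qed

lemma subfield_diff:
  assumes "is_real_subfield K" "a \<in> K" "b \<in> K"
  shows "a - b \<in> K"
proof -
  have "a + - b \<in> K"
    using assms unfolding is_real_subfield_def by blast
  then show ?thesis
    by simp
qed

lemma subfield_mult: "is_real_subfield K \<Longrightarrow> a \<in> K \<Longrightarrow> b \<in> K \<Longrightarrow> a * b \<in> K"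
  unfolding is_real_subfield_def by blast

lemma incidence_in_subfield: "is_real_subfield K \<Longrightarrow> incidence p m e i \<in> K"
  unfolding incidence_def by (intro subfield_diff) (auto simp: is_real_subfield_def)

definition poly_over :: "real set \<Rightarrow> real poly \<Rightarrow> bool" where
  "poly_over K p \<longleftrightarrow> (\<forall>i. coeff p i \<in> K)"

lemma poly_over_of_int: "is_real_subfield K \<Longrightarrow> poly_over K (of_int k)"
  by (auto simp: poly_over_def of_int_poly coeff_pCons subfield_of_int split: nat.split)
    (auto simp: is_real_subfield_def)

lemma poly_over_pCons:
  "is_real_subfield K \<Longrightarrow> a \<in> K \<Longrightarrow> poly_over K p \<Longrightarrow> poly_over K (pCons a p)"
  by (simp add: poly_over_def coeff_pCons split: nat.split)

lemma poly_over_0: "is_real_subfield K \<Longrightarrow> poly_over K 0"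
  by (simp add: poly_over_def is_real_subfield_def)

lemma poly_over_mult:
  "is_real_subfield K \<Longrightarrow> poly_over K p \<Longrightarrow> poly_over K q \<Longrightarrow> poly_over K (p * q)"
  unfolding poly_over_def coeff_mult by (intro allI subfield_sum) (auto simp: is_real_subfield_def)

lemma poly_over_sum:
  "is_real_subfield K \<Longrightarrow> (\<And>x. x \<in> S \<Longrightarrow> poly_over K (f x)) \<Longrightarrow> poly_over K (\<Sum>x\<in>S. f x)"
  unfolding poly_over_def coeff_sum by (intro allI subfield_sum) auto

lemma poly_over_prod:
  "is_real_subfield K \<Longrightarrow> (\<And>x. x \<in> S \<Longrightarrow> poly_over K (f x)) \<Longrightarrow> poly_over K (\<Prod>x\<in>S. f x)"
  by (induction S rule: infinite_finite_induct)
    (auto simp: poly_over_mult poly_over_of_int[where k=1, simplified])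

lemma poly_over_det:
  "is_real_subfield K \<Longrightarrow> (\<And>i j. poly_over K (M $ i $ j)) \<Longrightarrow> poly_over K (det M)"
  unfolding det_def by (intro poly_over_sum poly_over_mult poly_over_of_int poly_over_prod)

lemma poly_eqI_on_infinite:
  fixes p q :: "real poly"
  assumes "infinite S" and "\<And>z. z \<in> S \<Longrightarrow> poly p z = poly q z"
  shows "p = q"
proof (rule ccontr)
  assume "p \<noteq> q"
  then have "finite {z. poly (p - q) z = 0}"
    by (intro poly_roots_finite) simp
  moreover have "S \<subseteq> {z. poly (p - q) z = 0}"
    using assms(2) by auto
  ultimately show False
    using assms(1) finite_subset by blast
qed

definition poly_mat :: "real poly^'n^'m \<Rightarrow> real \<Rightarrow> real^'n^'m" where
  "poly_mat M z = (\<chi> i j. poly (M $ i $ j) z)"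

lemma poly_det: "poly (det M) z = det (poly_mat M z)"
  unfolding det_def by (simp add: poly_sum poly_prod poly_mat_def)

definition cramer_num :: "'a::comm_ring_1^'n^'n \<Rightarrow> 'n \<Rightarrow> 'n \<Rightarrow> 'a" where
  "cramer_num A k j = det (\<chi> i l. if l = k then axis j 1 $ i else A $ i $ l)"

definition cramer_inverse :: "'a::field^'n^'n \<Rightarrow> 'a^'n^'n" where
  "cramer_inverse A = (\<chi> k j. cramer_num A k j / det A)"

lemma poly_cramer_num: "poly (cramer_num M k j) z = cramer_num (poly_mat M z) k j"
  unfolding cramer_num_def poly_det by (rule arg_cong[where f=det]) (simp add: poly_mat_def vec_eq_iff axis_def)

lemma poly_over_cramer_num:
  "is_real_subfield K \<Longrightarrow> (\<And>i j. poly_over K (M $ i $ j)) \<Longrightarrow> poly_over K (cramer_num M k j)"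
  unfolding cramer_num_def
  by (intro poly_over_det) (auto simp: axis_def poly_over_of_int[where k=0, simplified]
      poly_over_of_int[where k=1, simplified])

lemma matrix_mul_cramer_inverse:
  fixes A :: "'a::field^'n^'n"
  assumes "det A \<noteq> 0"
  shows "A ** cramer_inverse A = mat 1"
proof -
  have "A *v column j (cramer_inverse A) = axis j 1" for j
  proof -
    have "column j (cramer_inverse A) =
          (\<chi> k. det (\<chi> i l. if l = k then axis j 1 $ i else A $ i $ l) / det A)"
      by (simp add: cramer_inverse_def cramer_num_def column_def)
    then show ?thesis
      using cramer[OF assms] by blast
  qed
  then show ?thesis
    by (simp add: vec_eq_iff matrix_matrix_mult_def matrix_vector_mult_def column_def axis_def mat_def)
qed

section \<open>Maximizers on \<open>B\<^sub>e\<close>\<close>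

lemma inner_eq_on_maximal_face:
  fixes b f w :: "'a::real_inner"
  assumes S: "finite S" and b: "b \<in> convex hull S"
    and le: "\<forall>s\<in>S. inner s f \<le> D" and ge: "D \<le> inner b f"
    and face: "\<forall>s\<in>S. inner s f = D \<longrightarrow> inner s w = c"
  shows "inner b w = c"
proof -
  obtain u where u0: "\<forall>s\<in>S. 0 \<le> u s" and u1: "sum u S = 1" and ub: "(\<Sum>s\<in>S. u s *\<^sub>R s) = b"
    using b unfolding convex_hull_finite[OF S] by blast
  have bf: "inner b f = (\<Sum>s\<in>S. u s * inner s f)" and bw: "inner b w = (\<Sum>s\<in>S. u s * inner s w)"
    unfolding ub[symmetric] by (simp_all add: inner_sum_left)
  have gap: "(\<Sum>s\<in>S. u s * (D - inner s f)) = D - inner b f"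
    by (simp add: right_diff_distrib sum_subtractf bf u1 flip: sum_distrib_right)
  have nonneg: "\<forall>s\<in>S. 0 \<le> u s * (D - inner s f)"
    using u0 le by simp
  moreover have "(\<Sum>s\<in>S. u s * (D - inner s f)) = 0"
  proof -
    have "0 \<le> (\<Sum>s\<in>S. u s * (D - inner s f))"
      using nonneg by (intro sum_nonneg) blast
    then show ?thesis
      using gap ge by linarith
  qed
  ultimately have tight: "\<forall>s\<in>S. u s * (D - inner s f) = 0"
    by (simp add: sum_nonneg_eq_0_iff[OF S])
  have "\<forall>s\<in>S. u s * (inner s w - c) = 0"
  proof
    fix s assume s: "s \<in> S"
    show "u s * (inner s w - c) = 0"
    proof (cases "u s = 0")
      case False
      then have "inner s f = D"
        using tight s by auto
      then show ?thesis
        using face s by simp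
    qed simp
  qed
  then have "(\<Sum>s\<in>S. u s * (inner s w - c)) = 0"
    by (intro sum.neutral) blast
  then show ?thesis
    using u1 bw by (simp add: right_diff_distrib sum_subtractf flip: sum_distrib_right)
qed

lemma Bset_eq_convex_hull: "Bset e = convex hull ((\<lambda>(x, y). axis x 1 - axis y 1) ` (e \<times> e))"
  unfolding Bset_def by (rule arg_cong[where f="\<lambda>S. convex hull S"]) auto

lemma inner_axis_diff: "inner (axis x 1 - axis y 1) f = f $ x - f $ y"
  by (simp add: inner_diff_left inner_axis')

text \<open>The factor \<open>inner b f\<close> in the second identity makes it hold also when f is constant on e,
  where b need not lie on the face spanned by the extreme vertices.\<close>

lemma Bset_maximizer:
  fixes f w b :: "real^'n::finite"
  assumes xp: "xp \<in> e" and max: "\<forall>y\<in>e. f $ y \<le> f $ xp"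
    and xm: "xm \<in> e" and min: "\<forall>y\<in>e. f $ xm \<le> f $ y"
    and b: "b \<in> Bset e" and bmax: "\<forall>b'\<in>Bset e. inner b' f \<le> inner b f"
  shows "inner b f = f $ xp - f $ xm"
    and "(\<forall>x\<in>e. f $ x = f $ xp \<longrightarrow> w $ x = w $ xp) \<Longrightarrow> (\<forall>x\<in>e. f $ x = f $ xm \<longrightarrow> w $ x = w $ xm) \<Longrightarrow>
         inner b f * inner b w = (f $ xp - f $ xm) * (w $ xp - w $ xm)"
proof -
  let ?S = "(\<lambda>(x, y). axis x 1 - axis y 1) ` (e \<times> e) :: (real^'n) set"
  have S: "finite ?S"
    by simp
  have hull: "b \<in> convex hull ?S"
    using b by (simp add: Bset_eq_convex_hull)
  have le: "\<forall>s\<in>?S. inner s f \<le> f $ xp - f $ xm"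
    using max min by (auto simp: inner_axis_diff intro!: diff_mono)
  have "axis xp 1 - axis xm 1 \<in> Bset e"
    unfolding Bset_eq_convex_hull by (rule hull_inc) (use xp xm in auto)
  then have ge: "f $ xp - f $ xm \<le> inner b f"
    using bmax by (metis inner_axis_diff)
  show val: "inner b f = f $ xp - f $ xm"
    by (rule inner_eq_on_maximal_face[OF S hull le ge]) simp
  assume wp: "\<forall>x\<in>e. f $ x = f $ xp \<longrightarrow> w $ x = w $ xp"
    and wm: "\<forall>x\<in>e. f $ x = f $ xm \<longrightarrow> w $ x = w $ xm"
  show "inner b f * inner b w = (f $ xp - f $ xm) * (w $ xp - w $ xm)"
  proof (cases "f $ xp = f $ xm")
    case False
    have face: "\<forall>s\<in>?S. inner s f = f $ xp - f $ xm \<longrightarrow> inner s w = w $ xp - w $ xm"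
    proof (clarsimp simp: inner_axis_diff)
      fix x y assume "x \<in> e" "y \<in> e" "f $ x - f $ y = f $ xp - f $ xm"
      moreover have "f $ x \<le> f $ xp" "f $ xm \<le> f $ y"
        using max min \<open>x \<in> e\<close> \<open>y \<in> e\<close> by auto
      ultimately have "f $ x = f $ xp" "f $ y = f $ xm"
        by linarith+
      then have "w $ x = w $ xp" "w $ y = w $ xm"
        using wp wm \<open>x \<in> e\<close> \<open>y \<in> e\<close> by blast+
      then show "w $ x - w $ y = w $ xp - w $ xm"
        by simp
    qed
    have "inner b w = w $ xp - w $ xm"
      by (rule inner_eq_on_maximal_face[OF S hull le ge face])
    then show ?thesis
      using val by simp
  qed (simp add: val)
qed

section \<open>Contraction along an order pattern\<close>

lemma arg_max_on_greatest:
  fixes f :: "'a \<Rightarrow> 'b::linorder"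
  assumes "finite S" "S \<noteq> {}"
  shows "arg_max_on f S \<in> S" and "\<forall>y\<in>S. f y \<le> f (arg_max_on f S)"
proof -
  have "Max (f ` S) \<in> f ` S"
    using assms by simp
  then obtain x where "x \<in> S" "f x = Max (f ` S)"
    by (metis imageE)
  then have "is_arg_max f (\<lambda>x. x \<in> S) x"
    using assms by (simp add: is_arg_max_linorder)
  then have "is_arg_max f (\<lambda>x. x \<in> S) (arg_max_on f S)"
    unfolding arg_max_on_def arg_max_def by (rule someI)
  then show "arg_max_on f S \<in> S" and "\<forall>y\<in>S. f y \<le> f (arg_max_on f S)"
    by (simp_all add: is_arg_max_linorder)
qed

lemma arg_min_on_least:
  fixes f :: "'a \<Rightarrow> 'b::linorder"
  assumes "finite S" "S \<noteq> {}"
  shows "arg_min_on f S \<in> S" and "\<forall>y\<in>S. f (arg_min_on f S) \<le> f y"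
  using arg_min_if_finite(1)[OF assms] arg_min_least[OF assms] by auto

lemma order_class_le_iff:
  assumes "f \<in> order_class f0"
  shows "f $ x \<le> f $ y \<longleftrightarrow> f0 $ x \<le> f0 $ y"
proof -
  have "sgn (f $ x - f $ y) = sgn (f0 $ x - f0 $ y)"
    using assms by (simp add: order_class_def)
  then show ?thesis
    by (auto simp: sgn_if split: if_splits)
qed

lemma order_class_eq_iff:
  assumes "f \<in> order_class f0"
  shows "f $ x = f $ y \<longleftrightarrow> f0 $ x = f0 $ y"
  using order_class_le_iff[OF assms, of x y] order_class_le_iff[OF assms, of y x]
  by (simp add: order.eq_iff)

text \<open>Vertices with equal f0-value are merged into the representative \<open>rep x\<close>, and each edge is
  replaced by the pair of representatives of its f0-extreme vertices.  The contracted matrix acts on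
  the representatives; for a non-representative its row is the identity row (mass 1, no incident
  edge).  The entries of its inverse, written by Cramer's rule, form the rational matrix N.\<close>

locale order_pattern =
  fixes E :: "'n::finite set set" and \<omega> :: "'n set \<Rightarrow> real" and d :: "'n \<Rightarrow> real"
    and f0 :: "real^'n"
  assumes hypergraph: "gen_hypergraph E \<omega> d"
begin

definition rep :: "'n \<Rightarrow> 'n" where
  "rep x = (SOME y. f0 $ y = f0 $ x)"

definition top_vertex :: "'n set \<Rightarrow> 'n" where
  "top_vertex e = arg_max_on (($) f0) e"

definition bottom_vertex :: "'n set \<Rightarrow> 'n" where
  "bottom_vertex e = arg_min_on (($) f0) e"

definition hi :: "'n set \<Rightarrow> 'n" where
  "hi e = rep (top_vertex e)"

definition lo :: "'n set \<Rightarrow> 'n" where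
  "lo e = rep (bottom_vertex e)"

definition mass :: "'n \<Rightarrow> real" where
  "mass a = (if rep a = a then (\<Sum>y | rep y = a. d y) else 1)"

abbreviation contracted :: "real \<Rightarrow> real^'n^'n" where
  "contracted z \<equiv> diag_plus_laplacian mass E \<omega> hi lo z"

definition contracted_poly :: "real poly^'n^'n" where
  "contracted_poly =
     (\<chi> i j. [:if i = j then mass i else 0, \<Sum>e\<in>E. \<omega> e * incidence hi lo e i * incidence hi lo e j:])"

definition resolvent :: "'n \<Rightarrow> 'n \<Rightarrow> real poly \<times> real poly" where
  "resolvent i j = (cramer_num contracted_poly (rep i) (rep j), det contracted_poly)"

definition rep_restrict :: "real^'n \<Rightarrow> real^'n" where
  "rep_restrict f = (\<chi> a. if rep a = a then f $ a else 0)"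

definition aggregate :: "real^'n \<Rightarrow> real^'n" where
  "aggregate g = (\<chi> a. \<Sum>y | rep y = a. g $ y)"

lemma rep_value: "f0 $ rep x = f0 $ x"
  unfolding rep_def by (rule someI[of _ x]) (rule refl)

lemma rep_eq_iff: "rep x = rep y \<longleftrightarrow> f0 $ x = f0 $ y"
  by (metis rep_def rep_value)

lemma rep_rep [simp]: "rep (rep x) = rep x"
  by (simp add: rep_eq_iff rep_value)

lemma hi_rep [simp]: "rep (hi e) = hi e" and lo_rep [simp]: "rep (lo e) = lo e"
  by (simp_all add: hi_def lo_def)

lemma order_class_rep: "f \<in> order_class f0 \<Longrightarrow> f $ rep x = f $ x"
  by (simp add: order_class_eq_iff rep_value)

lemma edge_nonempty: "e \<in> E \<Longrightarrow> e \<noteq> {}"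
  and weight_pos: "e \<in> E \<Longrightarrow> \<omega> e > 0"
  and degree_pos: "d x > 0"
  using hypergraph by (auto simp: gen_hypergraph_def)

lemma mass_pos: "mass a > 0"
proof (cases "rep a = a")
  case True
  then have "(\<Sum>y | rep y = a. d y) > 0"
    by (intro sum_pos) (auto simp: degree_pos)
  then show ?thesis
    using True by (simp add: mass_def)
qed (simp add: mass_def)

lemma extremal_vertices:
  assumes "e \<in> E" and f: "f \<in> order_class f0"
  shows "top_vertex e \<in> e" "\<forall>y\<in>e. f $ y \<le> f $ top_vertex e"
    and "bottom_vertex e \<in> e" "\<forall>y\<in>e. f $ bottom_vertex e \<le> f $ y"
  using arg_max_on_greatest[of e "($) f0"] arg_min_on_least[of e "($) f0"] edge_nonempty[OF assms(1)]
  by (auto simp: top_vertex_def bottom_vertex_def order_class_le_iff[OF f])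

lemma inner_Bset_maximizer:
  assumes e: "e \<in> E" and f: "f \<in> order_class f0"
    and b: "b \<in> Bset e" and bmax: "\<forall>b'\<in>Bset e. inner b' f \<le> inner b f"
  shows "inner b f = f $ hi e - f $ lo e"
    and "inner b f * inner b (\<chi> y. if rep y = a then 1 else 0) = (f $ hi e - f $ lo e) * incidence hi lo e a"
proof -
  let ?w = "(\<chi> y. if rep y = a then 1 else 0) :: real^'n"
  note ext = extremal_vertices[OF e f]
  have fhl: "f $ hi e = f $ top_vertex e" "f $ lo e = f $ bottom_vertex e"
    by (simp_all add: hi_def lo_def order_class_rep[OF f])
  show "inner b f = f $ hi e - f $ lo e"
    using Bset_maximizer(1)[OF ext b bmax] fhl by simp
  have level: "?w $ x = ?w $ y" if "f $ x = f $ y" for x y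
  proof -
    have "rep x = rep y"
      using that by (simp add: rep_eq_iff order_class_eq_iff[OF f])
    then show ?thesis
      by simp
  qed
  have "inner b f * inner b ?w = (f $ top_vertex e - f $ bottom_vertex e) *
          (?w $ top_vertex e - ?w $ bottom_vertex e)"
    by (rule Bset_maximizer(2)[OF ext b bmax]) (use level in blast)+
  then show "inner b f * inner b ?w = (f $ hi e - f $ lo e) * incidence hi lo e a"
    using fhl by (simp add: incidence_def hi_def lo_def)
qed

lemma aggregate_add_scale: "aggregate (x + c *\<^sub>R y) = aggregate x + c *\<^sub>R aggregate y"
  by (simp add: aggregate_def vec_eq_iff sum.distrib sum_distrib_left)

lemma inner_class_indicator:
  "inner v (\<chi> y. if rep y = a then 1 else 0) = (\<Sum>y | rep y = a. v $ y)"
  unfolding inner_vec_def by (simp add: if_distrib sum.If_cases cong: if_cong)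

lemma aggregate_Dmul:
  assumes f: "f \<in> order_class f0"
  shows "aggregate (Dmul d f) $ a = mass a * rep_restrict f $ a"
proof (cases "rep a = a")
  case True
  have "f $ y = f $ a" if "rep y = a" for y
    using order_class_rep[OF f, of y] that by simp
  then have "(\<Sum>y | rep y = a. d y * f $ y) = (\<Sum>y | rep y = a. d y * f $ a)"
    by (intro sum.cong) auto
  then show ?thesis
    using True by (simp add: aggregate_def Dmul_def mass_def rep_restrict_def sum_distrib_right)
next
  case False
  then have "{y. rep y = a} = {}"
    by auto
  then show ?thesis
    using False by (simp add: aggregate_def rep_restrict_def)
qed

lemma aggregate_hL:
  assumes f: "f \<in> order_class f0" and v: "v \<in> hL E \<omega> f"
  shows "aggregate v $ a = (\<Sum>e\<in>E. \<omega> e * incidence hi lo e a * (f $ hi e - f $ lo e))"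
proof -
  obtain b where v_def: "v = (\<Sum>e\<in>E. (\<omega> e * inner (b e) f) *\<^sub>R b e)"
    and b: "\<forall>e\<in>E. b e \<in> Bset e \<and> (\<forall>b'\<in>Bset e. inner b' f \<le> inner (b e) f)"
    using v unfolding hL_def by blast
  let ?w = "(\<chi> y. if rep y = a then 1 else 0) :: real^'n"
  have "aggregate v $ a = (\<Sum>y | rep y = a. \<Sum>e\<in>E. \<omega> e * inner (b e) f * b e $ y)"
    by (simp add: v_def aggregate_def sum_component)
  also have "\<dots> = (\<Sum>e\<in>E. \<omega> e * (inner (b e) f * (\<Sum>y | rep y = a. b e $ y)))"
    by (subst sum.swap) (simp add: sum_distrib_left mult.assoc)
  also have "\<dots> = (\<Sum>e\<in>E. \<omega> e * (inner (b e) f * inner (b e) ?w))"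
    by (simp add: inner_class_indicator)
  also have "\<dots> = (\<Sum>e\<in>E. \<omega> e * incidence hi lo e a * (f $ hi e - f $ lo e))"
  proof (rule sum.cong[OF refl])
    fix e assume e: "e \<in> E"
    then have "inner (b e) f * inner (b e) ?w = (f $ hi e - f $ lo e) * incidence hi lo e a"
      using inner_Bset_maximizer(2)[OF e f] b by blast
    then show "\<omega> e * (inner (b e) f * inner (b e) ?w) = \<omega> e * incidence hi lo e a * (f $ hi e - f $ lo e)"
      by simp
  qed
  finally show ?thesis .
qed

lemma contracted_rep_restrict:
  assumes f: "f \<in> order_class f0" and g: "g \<in> G_lam E \<omega> d z f"
  shows "contracted z *v rep_restrict f = aggregate g"
proof -
  obtain v where g_def: "g = Dmul d f + z *\<^sub>R v" and v: "v \<in> hL E \<omega> f"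
    using g unfolding G_lam_def by blast
  have "rep_restrict f $ hi e = f $ hi e" "rep_restrict f $ lo e = f $ lo e" for e
    by (simp_all add: rep_restrict_def)
  then have "(contracted z *v rep_restrict f) $ a = aggregate g $ a" for a
    by (simp add: diag_plus_laplacian_mult_component g_def aggregate_add_scale
        aggregate_Dmul[OF f] aggregate_hL[OF f v])
  then show ?thesis
    by (simp add: vec_eq_iff)
qed

lemma poly_mat_contracted_poly: "poly_mat contracted_poly z = contracted z"
  by (simp add: poly_mat_def contracted_poly_def diag_plus_laplacian_def vec_eq_iff)

lemma mass_weight_signs: "\<forall>i. mass i > 0" "\<forall>e\<in>E. \<omega> e \<ge> 0"
  using mass_pos weight_pos by (simp, meson less_imp_le)

lemma det_contracted_nonzero: "z \<ge> 0 \<Longrightarrow> det (contracted z) \<noteq> 0"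
  by (rule det_diag_plus_laplacian_nonzero[OF mass_weight_signs])

lemma rat_eval_resolvent: "rat_eval (resolvent i j) z = cramer_inverse (contracted z) $ rep i $ rep j"
  by (simp add: rat_eval_def resolvent_def poly_cramer_num poly_det poly_mat_contracted_poly
      cramer_inverse_def)

lemma contracted_mult_cramer_inverse:
  "z \<ge> 0 \<Longrightarrow> contracted z ** cramer_inverse (contracted z) = mat 1"
  by (rule matrix_mul_cramer_inverse[OF det_contracted_nonzero])

lemma transpose_cramer_inverse_contracted:
  "z \<ge> 0 \<Longrightarrow> transpose (cramer_inverse (contracted z)) = cramer_inverse (contracted z)"
  by (rule diag_plus_laplacian_right_inverse(1)[OF mass_weight_signs _ contracted_mult_cramer_inverse])

lemma cramer_inverse_contracted_nonneg:
  "z \<ge> 0 \<Longrightarrow> cramer_inverse (contracted z) $ k $ j \<ge> 0"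
  by (rule diag_plus_laplacian_right_inverse(2)[OF mass_weight_signs _ contracted_mult_cramer_inverse])

lemma resolvent_symmetric: "rat_eq (resolvent i j) (resolvent j i)"
proof -
  have "cramer_num contracted_poly a b = cramer_num contracted_poly b a" for a b
  proof (rule poly_eqI_on_infinite[of "{0<..}"])
    fix z :: real assume "z \<in> {0<..}"
    then have z: "z \<ge> 0"
      by simp
    let ?X = "cramer_inverse (contracted z)"
    have "poly (cramer_num contracted_poly a b) z = ?X $ a $ b * det (contracted z)"
      and "poly (cramer_num contracted_poly b a) z = ?X $ b $ a * det (contracted z)"
      using det_contracted_nonzero[OF z]
      by (simp_all add: poly_cramer_num poly_mat_contracted_poly cramer_inverse_def)
    moreover have "?X $ a $ b = transpose ?X $ b $ a"
      by (simp add: transpose_def)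
    then have "?X $ a $ b = ?X $ b $ a"
      by (simp add: transpose_cramer_inverse_contracted[OF z])
    ultimately show "poly (cramer_num contracted_poly a b) z = poly (cramer_num contracted_poly b a) z"
      by simp
  qed (rule infinite_Ioi)
  then show ?thesis
    by (simp add: rat_eq_def resolvent_def)
qed

lemma resolvent_in_Kz: "in_Kz (weight_field E \<omega> d) (resolvent i j)"
proof -
  let ?K = "weight_field E \<omega> d"
  have K: "is_real_subfield ?K"
    unfolding weight_field_def by (rule gen_field_is_subfield)
  have generators: "\<omega> ` E \<union> range d \<subseteq> ?K"
    unfolding weight_field_def by (rule subset_gen_field)
  then have weights: "\<omega> e \<in> ?K" if "e \<in> E" for e
    using that by blast
  have degrees: "d x \<in> ?K" for x
    using generators by blast
  have zero_one: "0 \<in> ?K" "1 \<in> ?K"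
    using K by (simp_all add: is_real_subfield_def)
  have "mass a \<in> ?K" for a
    unfolding mass_def using zero_one(2) by (simp add: subfield_sum[OF K] degrees)
  moreover have "(\<Sum>e\<in>E. \<omega> e * incidence hi lo e i * incidence hi lo e j) \<in> ?K" for i j
    by (intro subfield_sum[OF K] subfield_mult[OF K] weights incidence_in_subfield[OF K])
  ultimately have "poly_over ?K (contracted_poly $ i $ j)" for i j
    unfolding contracted_poly_def using zero_one
    by (simp add: poly_over_pCons[OF K] poly_over_0[OF K])
  then have "poly_over ?K (cramer_num contracted_poly (rep i) (rep j))" "poly_over ?K (det contracted_poly)"
    using K by (simp_all add: poly_over_cramer_num poly_over_det)
  moreover have "poly (det contracted_poly) 1 \<noteq> 0"
    by (simp add: poly_det poly_mat_contracted_poly det_contracted_nonzero)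
  ultimately show ?thesis
    unfolding in_Kz_def resolvent_def poly_over_def by auto
qed

lemma sum_rep_mult: "(\<Sum>y\<in>UNIV. c (rep y) * g $ y) = (\<Sum>a\<in>UNIV. c a * aggregate g $ a)"
proof -
  have "(\<Sum>y\<in>UNIV. c (rep y) * g $ y) = (\<Sum>a\<in>UNIV. \<Sum>y\<in>{y\<in>UNIV. rep y = a}. c (rep y) * g $ y)"
    by (rule sum.group[symmetric]) auto
  also have "\<dots> = (\<Sum>a\<in>UNIV. c a * aggregate g $ a)"
    by (simp add: aggregate_def sum_distrib_left)
  finally show ?thesis .
qed

lemma resolvent_solves:
  assumes z: "z > 0" and f: "f \<in> order_class f0" and g: "g \<in> G_lam E \<omega> d z f"
  shows "eval_mat resolvent z *v g = f"
proof -
  let ?X = "cramer_inverse (contracted z)"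
  have "z \<ge> 0"
    using z by simp
  then have "?X ** contracted z = mat 1"
    by (rule matrix_left_right_inverse[THEN iffD1, OF contracted_mult_cramer_inverse])
  then have Xg: "?X *v aggregate g = rep_restrict f"
    by (simp flip: contracted_rep_restrict[OF f g] add: matrix_vector_mul_assoc)
  have "(eval_mat resolvent z *v g) $ x = f $ x" for x
  proof -
    have "(eval_mat resolvent z *v g) $ x = (\<Sum>y\<in>UNIV. ?X $ rep x $ rep y * g $ y)"
      by (simp add: eval_mat_def matrix_vector_mult_def rat_eval_resolvent)
    also have "\<dots> = (?X *v aggregate g) $ rep x"
      by (simp add: sum_rep_mult matrix_vector_mult_def)
    finally show ?thesis
      by (simp add: Xg rep_restrict_def order_class_rep[OF f])
  qed
  then show ?thesis
    by (simp add: vec_eq_iff)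
qed

lemma order_class_rational_inverse:
  "\<exists>N. (\<forall>i j. in_Kz (weight_field E \<omega> d) (N i j)) \<and> (\<forall>i j. rat_eq (N i j) (N j i)) \<and>
      (\<forall>lam > 0. (\<forall>i j. poly (snd (N i j)) lam \<noteq> 0) \<and> (\<forall>i j. rat_eval (N i j) lam \<ge> 0) \<and>
         (\<forall>f \<in> order_class f0. \<forall>g \<in> G_lam E \<omega> d lam f. eval_mat N lam *v g = f))"
proof (intro exI[of _ resolvent] conjI allI impI ballI)
  fix i j and lam :: real and f g
  show "in_Kz (weight_field E \<omega> d) (resolvent i j)"
    by (rule resolvent_in_Kz)
  show "rat_eq (resolvent i j) (resolvent j i)"
    by (rule resolvent_symmetric)
  assume lam: "lam > 0"
  then show "poly (snd (resolvent i j)) lam \<noteq> 0"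
    by (simp add: resolvent_def poly_det poly_mat_contracted_poly det_contracted_nonzero)
  show "rat_eval (resolvent i j) lam \<ge> 0"
    using lam by (simp add: rat_eval_resolvent cramer_inverse_contracted_nonneg)
  assume "f \<in> order_class f0" and "g \<in> G_lam E \<omega> d lam f"
  then show "eval_mat resolvent lam *v g = f"
    by (rule resolvent_solves[OF lam])
qed

end

theorem mainTheorem17:
  fixes E :: "'n::finite set set" and \<omega> :: "'n set \<Rightarrow> real" and d :: "'n \<Rightarrow> real"
  assumes "gen_hypergraph E \<omega> d"
  shows "\<forall>U \<in> (order_classes :: (real^'n) set set).
    \<exists>N :: 'n \<Rightarrow> 'n \<Rightarrow> real poly \<times> real poly.
      (\<forall>i j. in_Kz (weight_field E \<omega> d) (N i j)) \<and>
      (\<forall>i j. rat_eq (N i j) (N j i)) \<and>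
      (\<forall>lam > 0.
         (\<forall>i j. poly (snd (N i j)) lam \<noteq> 0) \<and>
         (\<forall>i j. rat_eval (N i j) lam \<ge> 0) \<and>
         (\<forall>f \<in> U. \<forall>g \<in> G_lam E \<omega> d lam f. eval_mat N lam *v g = f))"
  using order_pattern.order_class_rational_inverse[OF order_pattern.intro[OF assms]]
  by (simp add: order_classes_def)

end
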